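(* Let $f:(0,\infty)\to\mathbb R$ be convex, differentiable at $1$, with $f(1)=0$ and $f(0):=\lim_{t\to0^+}f(t)<\infty$, such that $g(t):=\frac{f(t)-f(0)}{t}$ is convex on $(0,\infty)$; assume $f(0)+f'(1)>0$. For $\xi_1\in[0,1)$, $\xi_2\in(1,\infty]$ define $$\kappa(\xi_1,\xi_2):=\sup_{t\in(\xi_1,1)\cup(1,\xi_2)}\frac{f(t)+f'(1)(1-t)}{(t-1)^2}.$$ Let $\mathcal X,\mathcal Y$ be finite or countably infinite, let $P_X\ne Q_X$ be probability mass functions with full support on $\mathcal X$, let $W_{Y|X}$ be a stochastic transformation such that every $y\in\mathcal Y$ has some $x$ with $W_{Y|X}(y|x)>0$, let $P_Y=P_XW_{Y|X}$, $Q_Y=Q_XW_{Y|X}$, and let $\xi_1:=\inf_xP_X(x)/Q_X(x)$, $\xi_2:=\sup_xP_X(x)/Q_X(x)$. Then $$\frac{D_f(P_Y\|Q_Y)}{D_f(P_X\|Q_X)}\le\frac{\kappa(\xi_1,\xi_2)}{f(0)+f'(1)}\cdot\frac{\chi^2(P_Y\|Q_Y)}{\chi^2(P_X\|Q_X)}.$$ Consequently, if $Q_X$ is finitely supported on $\mathcal X$ (and not a point mass), $$\mu_f(Q_X,W_{Y|X})\le\frac{1}{f(0)+f'(1)}\,\kappa\Big(0,\frac1{\min_xQ_X(x)}\Big)\,\mu_{\chi^2}(Q_X,W_{Y|X}).$$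
   Context: $D_f(P\|Q):=\sum_xQ(x)f(P(x)/Q(x))$ is the $f$-divergence; $\chi^2(P\|Q)=\sum_x(P(x)-Q(x))^2/Q(x)$. The contraction coefficient is $\mu_f(Q_X,W_{Y|X}):=\sup\{D_f(P_Y\|Q_Y)/D_f(P_X\|Q_X): D_f(P_X\|Q_X)\in(0,\infty)\}$ with $P_Y=P_XW_{Y|X}$, $Q_Y=Q_XW_{Y|X}$; $\mu_{\chi^2}$ is the same with $f(t)=(t-1)^2$. *)

theory Defs
  imports "HOL-Analysis.Analysis" "HOL-Library.Extended_Real"
begin

definition is_pmf :: "('a \<Rightarrow> real) \<Rightarrow> bool" where
  "is_pmf P \<longleftrightarrow> (\<forall>x. 0 \<le> P x) \<and> (P has_sum 1) UNIV"

text \<open>Stochastic transformation W x y = W(y|x).\<close>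
definition is_channel :: "('a \<Rightarrow> 'b \<Rightarrow> real) \<Rightarrow> bool" where
  "is_channel W \<longleftrightarrow> (\<forall>x. (\<forall>y. 0 \<le> W x y) \<and> (W x has_sum 1) UNIV)"

definition push :: "('a \<Rightarrow> real) \<Rightarrow> ('a \<Rightarrow> 'b \<Rightarrow> real) \<Rightarrow> 'b \<Rightarrow> real" where
  "push P W = (\<lambda>y. \<Sum>\<^sub>\<infinity>x. P x * W x y)"

text \<open>f-divergence (terms with Q x = 0 never occur in our use: Q has full support).\<close>
definition Df :: "(real \<Rightarrow> real) \<Rightarrow> ('a \<Rightarrow> real) \<Rightarrow> ('a \<Rightarrow> real) \<Rightarrow> real" where
  "Df f P Q = (\<Sum>\<^sub>\<infinity>x. Q x * f (P x / Q x))"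

definition Df_finite :: "(real \<Rightarrow> real) \<Rightarrow> ('a \<Rightarrow> real) \<Rightarrow> ('a \<Rightarrow> real) \<Rightarrow> bool" where
  "Df_finite f P Q \<longleftrightarrow> (\<lambda>x. Q x * f (P x / Q x)) summable_on UNIV"

definition chi2 :: "('a \<Rightarrow> real) \<Rightarrow> ('a \<Rightarrow> real) \<Rightarrow> real" where
  "chi2 P Q = (\<Sum>\<^sub>\<infinity>x. (P x - Q x)^2 / Q x)"

definition chi2_finite :: "('a \<Rightarrow> real) \<Rightarrow> ('a \<Rightarrow> real) \<Rightarrow> bool" where
  "chi2_finite P Q \<longleftrightarrow> (\<lambda>x. (P x - Q x)^2 / Q x) summable_on UNIV"

text \<open>Extension of f by its limit value f0 at 0.\<close>
definition fext :: "(real \<Rightarrow> real) \<Rightarrow> real \<Rightarrow> real \<Rightarrow> real" where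
  "fext f f0 t = (if t = 0 then f0 else f t)"

definition mu :: "(real \<Rightarrow> real) \<Rightarrow> ('a \<Rightarrow> real) \<Rightarrow> ('a \<Rightarrow> 'b \<Rightarrow> real) \<Rightarrow> ereal" where
  "mu f Q W = (SUP P \<in> {P. is_pmf P \<and> Df_finite f P Q \<and> 0 < Df f P Q}.
       ereal (Df f (push P W) (push Q W) / Df f P Q))"

definition kappa :: "(real \<Rightarrow> real) \<Rightarrow> real \<Rightarrow> real \<Rightarrow> ereal \<Rightarrow> ereal" where
  "kappa f f1 xi1 xi2 = (SUP t \<in> {t. xi1 < t \<and> t < 1} \<union> {t. 1 < t \<and> ereal t < xi2}.
       ereal ((f t + f1 * (1 - t)) / (t - 1)^2))"

end

theory Submission
  imports Defs
begin

text \<open>Convexity of \<open>g(t) = (f(t) - f(0))/t\<close> at \<open>t = 1\<close>, where \<open>g'(1) = f(0) + f'(1)\<close>,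
  gives the tangent bound \<open>f(t) + f'(1)(1 - t) \<ge> (f(0) + f'(1))(t - 1)\<^sup>2\<close>. Since the affine term
  \<open>f'(1)(1 - t)\<close> has mean zero under \<open>Q\<close>, adding it does not change \<open>D\<^sub>f\<close>, so
  \<open>(f(0) + f'(1)) \<chi>\<^sup>2(P\<^sub>X\<parallel>Q\<^sub>X) \<le> D\<^sub>f(P\<^sub>X\<parallel>Q\<^sub>X)\<close>. On the output side every ratio
  \<open>P\<^sub>Y(y)/Q\<^sub>Y(y)\<close> is an average of input ratios, hence lies in \<open>[\<xi>\<^sub>1, \<xi>\<^sub>2]\<close>, where
  \<open>f(t) + f'(1)(1 - t) \<le> \<kappa> (t - 1)\<^sup>2\<close> by definition of \<open>\<kappa>\<close>; thus
  \<open>D\<^sub>f(P\<^sub>Y\<parallel>Q\<^sub>Y) \<le> \<kappa> \<chi>\<^sup>2(P\<^sub>Y\<parallel>Q\<^sub>Y)\<close>, and dividing the two bounds gives the first claim.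
  For the second, \<open>P\<^sub>X(x)/Q\<^sub>X(x) \<le> 1/min Q\<^sub>X\<close> for every input distribution, and the ratio 0
  is harmless because \<open>\<kappa>\<close> is itself at least \<open>f(0) + f'(1)\<close>.\<close>

section \<open>Comparing \<open>f\<close>-divergences with \<open>\<chi>\<^sup>2\<close>\<close>

lemma has_sum_diff:
  fixes f g :: "'a \<Rightarrow> 'b::topological_ab_group_add"
  assumes "(f has_sum a) A" "(g has_sum b) A"
  shows "((\<lambda>x. f x - g x) has_sum (a - b)) A"
  using has_sum_add[OF assms(1), of "\<lambda>x. - g x" "- b"] assms(2) by (simp add: has_sum_uminus)

lemma Df_cmult: "Df (\<lambda>t. c * F t) P Q = c * Df F P Q"
  unfolding Df_def by (simp add: mult.left_commute infsum_cmult_right')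

lemma Df_finite_cmult: "Df_finite F P Q \<Longrightarrow> Df_finite (\<lambda>t. c * F t) P Q"
  unfolding Df_finite_def by (simp add: mult.left_commute summable_on_cmult_right)

lemma Df_mono:
  assumes "\<And>x. 0 \<le> Q x" and "\<And>x. 0 \<le> F (P x / Q x)" and "\<And>x. F (P x / Q x) \<le> G (P x / Q x)"
    and "Df_finite G P Q"
  shows "Df_finite F P Q" and "Df F P Q \<le> Df G P Q"
proof -
  have le: "Q x * F (P x / Q x) \<le> Q x * G (P x / Q x)" for x
    by (rule mult_left_mono[OF assms(3) assms(1)])
  show fin: "Df_finite F P Q"
    using assms(4) unfolding Df_finite_def
    by (rule summable_on_comparison_test) (use le assms(1,2) in auto)
  show "Df F P Q \<le> Df G P Q"
    using fin assms(4) unfolding Df_def Df_finite_def by (rule infsum_mono) (use le in auto)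
qed

lemma Df_chi2:
  assumes "\<And>x. Q x > 0"
  shows "Df (\<lambda>t. (t - 1)^2) P Q = chi2 P Q"
    and "Df_finite (\<lambda>t. (t - 1)^2) P Q \<longleftrightarrow> chi2_finite P Q"
proof -
  have "(\<lambda>x. Q x * (P x / Q x - 1)^2) = (\<lambda>x. (P x - Q x)^2 / Q x)"
    using assms by (intro ext) (simp add: field_simps power2_eq_square)
  then show "Df (\<lambda>t. (t - 1)^2) P Q = chi2 P Q"
    and "Df_finite (\<lambda>t. (t - 1)^2) P Q \<longleftrightarrow> chi2_finite P Q"
    unfolding Df_def chi2_def Df_finite_def chi2_finite_def by simp_all
qed

lemma chi2_nonneg: "(\<And>x. 0 \<le> Q x) \<Longrightarrow> 0 \<le> chi2 P Q"
  unfolding chi2_def by (rule infsum_nonneg) simp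

lemma chi2_eq_0_imp_eq:
  assumes "\<And>x. Q x > 0" and "chi2_finite P Q" and "chi2 P Q = 0"
  shows "P = Q"
proof
  fix x
  have "(P x - Q x)^2 / Q x = 0"
    using assms unfolding chi2_def chi2_finite_def
    by (intro nonneg_infsum_le_0D[where A = UNIV]) (auto simp: less_imp_le)
  then show "P x = Q x" using assms(1)[of x] by simp
qed

lemma chi2_pos:
  assumes "\<And>x. Q x > 0" and "chi2_finite P Q" and "P \<noteq> Q"
  shows "0 < chi2 P Q"
  using chi2_nonneg[of Q P] chi2_eq_0_imp_eq[OF assms(1,2)] assms(1,3)
  by (fastforce simp: less_imp_le)

lemma Df_add_linear:
  assumes P: "(P has_sum 1) UNIV" and Q: "(Q has_sum 1) UNIV" and Q_pos: "\<And>x. Q x > 0"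
  shows "Df (\<lambda>t. F t + a * (1 - t)) P Q = Df F P Q"
    and "Df_finite (\<lambda>t. F t + a * (1 - t)) P Q \<longleftrightarrow> Df_finite F P Q"
proof -
  define h where "h x = Q x * F (P x / Q x)" for x
  have eq: "(\<lambda>x. Q x * (F (P x / Q x) + a * (1 - P x / Q x))) = (\<lambda>x. h x + a * (Q x - P x))"
    using Q_pos by (intro ext) (simp add: h_def field_simps less_imp_neq[symmetric])
  have lin: "((\<lambda>x. a * (Q x - P x)) has_sum 0) UNIV"
    using has_sum_cmult_right[OF has_sum_diff[OF Q P], of a] by simp
  have sum_iff: "(\<lambda>x. h x + a * (Q x - P x)) summable_on UNIV \<longleftrightarrow> h summable_on UNIV"
  proof
    assume "(\<lambda>x. h x + a * (Q x - P x)) summable_on UNIV"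
    from has_sum_diff[OF has_sum_infsum[OF this] lin]
    show "h summable_on UNIV" by (auto simp: summable_on_def)
  qed (use summable_on_add[OF _ has_sum_imp_summable[OF lin]] in blast)
  then show "Df_finite (\<lambda>t. F t + a * (1 - t)) P Q \<longleftrightarrow> Df_finite F P Q"
    unfolding Df_finite_def eq h_def by simp
  have "infsum (\<lambda>x. h x + a * (Q x - P x)) UNIV = infsum h UNIV"
  proof (cases "h summable_on UNIV")
    case True
    then show ?thesis using infsum_add[OF True has_sum_imp_summable[OF lin]] infsumI[OF lin] by simp
  qed (use sum_iff in \<open>simp add: infsum_not_exists\<close>)
  then show "Df (\<lambda>t. F t + a * (1 - t)) P Q = Df F P Q"
    unfolding Df_def eq h_def by simp
qed

lemma chi2_le_Df:
  assumes Q_pos: "\<And>x. Q x > 0" and c: "c > 0"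
    and lower: "\<And>x. c * (P x / Q x - 1)^2 \<le> G (P x / Q x)" and fin: "Df_finite G P Q"
  shows "chi2_finite P Q" and "c * chi2 P Q \<le> Df G P Q"
proof -
  note mono = Df_mono[where F = "\<lambda>t. c * (t - 1)^2", OF _ _ lower fin]
  have "Df_finite (\<lambda>t. c * (t - 1)^2) P Q"
    using mono(1) Q_pos c by (simp add: less_imp_le)
  then have "Df_finite (\<lambda>t. inverse c * (c * (t - 1)^2)) P Q"
    by (rule Df_finite_cmult)
  moreover have "(\<lambda>t. inverse c * (c * (t - 1)^2)) = (\<lambda>t. (t - 1)^2)"
    using c by (simp add: field_simps)
  ultimately show "chi2_finite P Q"
    using Df_chi2(2)[where P = P and Q = Q, OF Q_pos] by simp
  show "c * chi2 P Q \<le> Df G P Q"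
    using mono(2) Q_pos c by (simp add: less_imp_le Df_cmult Df_chi2(1)[where P = P and Q = Q, OF Q_pos])
qed

lemma Df_le_chi2:
  assumes Q_pos: "\<And>x. Q x > 0" and nonneg: "\<And>x. 0 \<le> G (P x / Q x)"
    and upper: "\<And>x. G (P x / Q x) \<le> k * (P x / Q x - 1)^2" and fin: "chi2_finite P Q"
  shows "Df G P Q \<le> k * chi2 P Q"
proof -
  have "Df_finite (\<lambda>t. k * (t - 1)^2) P Q"
    using fin Df_chi2(2)[where P = P and Q = Q, OF Q_pos] by (simp add: Df_finite_cmult)
  from Df_mono(2)[OF _ nonneg upper this] show ?thesis
    using Q_pos by (simp add: less_imp_le Df_cmult Df_chi2(1)[where P = P and Q = Q, OF Q_pos])
qed

lemma Df_le_ereal_chi2: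
  assumes Q_pos: "\<And>x. Q x > 0" and c: "c > 0" and K: "0 < K" and G1: "G 1 = 0"
    and lower: "\<And>x. c * (P x / Q x - 1)^2 \<le> G (P x / Q x)"
    and upper: "\<And>x. P x / Q x \<noteq> 1 \<Longrightarrow> ereal (G (P x / Q x) / (P x / Q x - 1)^2) \<le> K"
  shows "ereal (Df G P Q) \<le> K * ereal (chi2 P Q)"
proof (cases "chi2_finite P Q")
  case False
  \<comment> \<open>Both series diverge, and a divergent \<open>infsum\<close> is \<open>0\<close>.\<close>
  then have "\<not> Df_finite G P Q" using chi2_le_Df(1)[where G = G and P = P and Q = Q, OF Q_pos c lower] by blast
  then have "Df G P Q = 0" unfolding Df_def Df_finite_def by (simp add: infsum_not_exists)
  moreover have "chi2 P Q = 0" using False unfolding chi2_def chi2_finite_def by (simp add: infsum_not_exists)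
  ultimately show ?thesis by (simp add: zero_ereal_def[symmetric])
next
  case fin: True
  have nonneg: "0 \<le> G (P x / Q x)" for x
    using lower[of x] c by (smt (verit) mult_nonneg_nonneg zero_le_power2)
  show ?thesis
  proof (cases K)
    case (real k)
    have "G (P x / Q x) \<le> k * (P x / Q x - 1)^2" for x
    proof (cases "P x / Q x = 1")
      case False
      then show ?thesis using upper[of x] real by (simp add: divide_le_eq)
    qed (simp add: G1)
    with Df_le_chi2[where G = G and P = P and Q = Q, OF Q_pos nonneg _ fin]
    show ?thesis using real by simp
  next
    case PInf
    \<comment> \<open>In \<open>ereal\<close>, \<open>\<infinity> * 0 = 0\<close>: the case \<open>\<chi>\<^sup>2 = 0\<close> still needs \<open>D\<^sub>f = 0\<close>.\<close>
    show ?thesis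
    proof (cases "chi2 P Q = 0")
      case True
      then have "P = Q" by (rule chi2_eq_0_imp_eq[OF Q_pos fin])
      then have "Df G P Q = 0" using Q_pos by (simp add: Df_def G1 less_imp_neq[symmetric])
      then show ?thesis using True by (simp add: zero_ereal_def[symmetric])
    qed (use PInf chi2_nonneg[of Q P] Q_pos in \<open>simp add: less_imp_le\<close>)
  qed (use K in simp)
qed

lemma ereal_ratio_le:
  fixes a b u v c :: real and K :: ereal
  assumes c: "c > 0" and b: "b > 0" and ab: "c * b \<le> a" and v: "0 \<le> v" and K: "0 \<le> K"
    and uv: "ereal u \<le> K * ereal v"
  shows "ereal (u / a) \<le> ereal (1 / c) * K * ereal (v / b)"
proof -
  have a: "a > 0" using c b ab by (smt (verit) mult_pos_pos)
  show ?thesis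
  proof (cases K)
    case (real k)
    have "u / a \<le> k * v / a"
      using uv real a by (simp add: divide_right_mono)
    also have "\<dots> \<le> k * v / (c * b)"
      using K real v c b ab a by (intro divide_left_mono) auto
    also have "\<dots> = 1 / c * k * (v / b)" by simp
    finally show ?thesis using real by simp
  next
    case PInf
    show ?thesis
    proof (cases "v = 0")
      case True
      then have "u / a \<le> 0" using uv PInf a by (simp add: divide_nonpos_pos)
      then show ?thesis using True by (simp add: zero_ereal_def[symmetric])
    qed (use PInf c b v in simp)
  qed (use K in simp)
qed

lemma Df_ratio_le_chi2_ratio:
  assumes P: "(P has_sum 1) UNIV" and Q: "(Q has_sum 1) UNIV" and Q_pos: "\<And>x. Q x > 0"
    and PY: "(PY has_sum 1) UNIV" and QY: "(QY has_sum 1) UNIV" and QY_pos: "\<And>y. QY y > 0"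
    and "P \<noteq> Q" and c: "c > 0" and K: "0 < K" and F1: "F 1 = 0" and fin: "Df_finite F P Q"
    and lower: "\<And>x. c * (P x / Q x - 1)^2 \<le> F (P x / Q x) + a * (1 - P x / Q x)"
    and lower_Y: "\<And>y. c * (PY y / QY y - 1)^2 \<le> F (PY y / QY y) + a * (1 - PY y / QY y)"
    and upper_Y: "\<And>y. PY y / QY y \<noteq> 1 \<Longrightarrow>
      ereal ((F (PY y / QY y) + a * (1 - PY y / QY y)) / (PY y / QY y - 1)^2) \<le> K"
  shows "ereal (Df F PY QY / Df F P Q) \<le> ereal (1 / c) * K * ereal (chi2 PY QY / chi2 P Q)"
proof (rule ereal_ratio_le[where c = c and K = K, OF c])
  let ?G = "\<lambda>t. F t + a * (1 - t)"
  have fin_G: "Df_finite ?G P Q" using fin Df_add_linear(2)[OF P Q Q_pos] by blast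
  show "0 < chi2 P Q"
    by (rule chi2_pos[OF Q_pos chi2_le_Df(1)[where G = ?G, OF Q_pos c lower fin_G] \<open>P \<noteq> Q\<close>])
  show "c * chi2 P Q \<le> Df F P Q"
    using chi2_le_Df(2)[where G = ?G, OF Q_pos c lower fin_G] Df_add_linear(1)[OF P Q Q_pos] by simp
  show "0 \<le> chi2 PY QY" by (rule chi2_nonneg) (simp add: QY_pos less_imp_le)
  show "ereal (Df F PY QY) \<le> K * ereal (chi2 PY QY)"
    using Df_le_ereal_chi2[where G = ?G and P = PY and Q = QY, OF QY_pos c K _ lower_Y upper_Y]
      F1 Df_add_linear(1)[OF PY QY QY_pos] by simp
qed (use K in simp)

section \<open>The tangent bound and \<open>\<kappa>\<close>\<close>

lemma quadratic_lower_bound: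
  fixes f :: "real \<Rightarrow> real"
  assumes f_deriv: "(f has_real_derivative f1) (at 1)" and f_one: "f 1 = 0"
    and g_convex: "convex_on {0<..} (\<lambda>t. (f t - f0) / t)" and t: "t > 0"
  shows "(f0 + f1) * (t - 1)^2 \<le> f t + f1 * (1 - t)"
proof -
  have "((\<lambda>t. (f t - f0) / t) has_real_derivative f0 + f1) (at 1)"
    using DERIV_divide[OF DERIV_diff[OF f_deriv DERIV_const] DERIV_ident] f_one
    by (simp add: add.commute)
  then have "(f0 + f1) * (t - 1) \<le> (f t - f0) / t - (f 1 - f0) / 1"
    using convex_on_imp_above_tangent[OF g_convex, of 1 t "f0 + f1"] t
    by (simp add: convex_connected interior_open has_field_derivative_at_within)
  then have "t * ((f0 + f1) * (t - 1)) \<le> t * ((f t - f0) / t + f0)"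
    using t f_one by (simp add: mult_left_mono)
  also have "\<dots> = f t - f0 + t * f0"
    using t by (simp add: field_simps)
  finally show ?thesis
    by (simp add: power2_eq_square algebra_simps)
qed

lemma le_kappa:
  assumes "(a < t \<and> t < 1) \<or> (1 < t \<and> ereal t < b)"
  shows "ereal ((f t + f1 * (1 - t)) / (t - 1)^2) \<le> kappa f f1 a b"
  unfolding kappa_def by (rule SUP_upper) (use assms in auto)

lemma f0_plus_f1_le_kappa:
  fixes f :: "real \<Rightarrow> real"
  assumes f_deriv: "(f has_real_derivative f1) (at 1)" and f_one: "f 1 = 0"
    and g_convex: "convex_on {0<..} (\<lambda>t. (f t - f0) / t)" and a: "0 \<le> a" "a < 1"
  shows "ereal (f0 + f1) \<le> kappa f f1 a b"
proof -
  define s where "s = (a + 1) / 2"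
  have s: "a < s" "s < 1" "0 < s" using a by (auto simp: s_def)
  have "(f0 + f1) * (s - 1)^2 \<le> f s + f1 * (1 - s)"
    by (rule quadratic_lower_bound[OF f_deriv f_one g_convex \<open>0 < s\<close>])
  then have "f0 + f1 \<le> (f s + f1 * (1 - s)) / (s - 1)^2"
    using s by (simp add: le_divide_eq)
  also have "ereal \<dots> \<le> kappa f f1 a b" by (rule le_kappa) (use s in auto)
  finally show ?thesis by simp
qed

lemma kappa_pos:
  fixes f :: "real \<Rightarrow> real"
  assumes "(f has_real_derivative f1) (at 1)" and "f 1 = 0"
    and "convex_on {0<..} (\<lambda>t. (f t - f0) / t)" and "0 \<le> a" "a < 1" and "f0 + f1 > 0"
  shows "0 < kappa f f1 a b"
  using f0_plus_f1_le_kappa[OF assms(1-5), of b] assms(6) by (metis ereal_less(2) order_less_le_trans)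

text \<open>The supremum defining \<open>\<kappa>\<close> ranges over open intervals, but the likelihood ratios
  may attain the endpoints; continuity of the convex \<open>f\<close> covers them.\<close>
lemma le_kappa_closed:
  fixes f :: "real \<Rightarrow> real"
  assumes f_convex: "convex_on {0<..} f" and t: "0 < t" "t \<noteq> 1" "a \<le> t" "ereal t \<le> b"
  shows "ereal ((f t + f1 * (1 - t)) / (t - 1)^2) \<le> kappa f f1 a b"
proof -
  let ?\<phi> = "\<lambda>s. ereal ((f s + f1 * (1 - s)) / (s - 1)^2)"
  have "continuous_on {0<..} f" by (rule convex_on_continuous[OF _ f_convex]) simp
  then have "isCont f t" using t continuous_on_eq_continuous_at[of "{0<..}" f] by auto
  then have "isCont (\<lambda>s. (f s + f1 * (1 - s)) / (s - 1)^2) t"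
    using t by (auto intro!: continuous_intros)
  then have lim: "(?\<phi> \<longlongrightarrow> ?\<phi> t) F" if "F \<le> at t" for F
    using tendsto_mono[OF that] by (auto intro: tendsto_ereal simp: isCont_def)
  consider "a < t \<and> t < 1" | "1 < t \<and> ereal t < b" | "t = a" "t < 1" | "ereal t = b" "1 < t"
    using t by force
  then show ?thesis
  proof cases
    case 3
    show ?thesis
    proof (rule tendsto_upperbound[OF lim[of "at_right t"]])
      show "\<forall>\<^sub>F s in at_right t. ?\<phi> s \<le> kappa f f1 a b"
        unfolding eventually_at_right_field using 3 by (blast intro: le_kappa)
    qed (simp_all add: at_le)
  next
    case 4
    show ?thesis
    proof (rule tendsto_upperbound[OF lim[of "at_left t"]])
      show "\<forall>\<^sub>F s in at_left t. ?\<phi> s \<le> kappa f f1 a b"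
        unfolding eventually_at_left_field using 4 by (intro exI[of _ 1]) (auto intro: le_kappa)
    qed (simp_all add: at_le)
  qed (auto intro: le_kappa)
qed

section \<open>Output distributions of a channel\<close>

lemma has_sum_le_single:
  fixes f :: "'a \<Rightarrow> real"
  assumes "(f has_sum s) UNIV" "\<And>x. 0 \<le> f x"
  shows "f y \<le> s"
  using finite_sum_le_has_sum[OF assms(1), of "{y}"] assms(2) by auto

lemma pmf_le_1: "is_pmf P \<Longrightarrow> P x \<le> 1"
  unfolding is_pmf_def using has_sum_le_single by metis

lemma pmf_exists_less:
  assumes P: "is_pmf P" and Q: "is_pmf Q" and "P \<noteq> Q"
  shows "\<exists>x. P x < Q x"
proof (rule ccontr)
  assume "\<not> (\<exists>x. P x < Q x)"
  then have nonneg: "0 \<le> P x - Q x" for x by (simp add: not_less)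
  have sum0: "((\<lambda>x. P x - Q x) has_sum 0) UNIV"
    using has_sum_diff[where f = P and g = Q and a = 1 and b = 1 and A = UNIV] P Q unfolding is_pmf_def by simp
  have "P x - Q x = 0" for x
    using nonneg_infsum_le_0D[OF _ has_sum_imp_summable[OF sum0] nonneg] infsumI[OF sum0] by simp
  then show False using \<open>P \<noteq> Q\<close> by auto
qed

lemma channel_nonneg: "is_channel W \<Longrightarrow> 0 \<le> W x y"
  unfolding is_channel_def by blast

lemma channel_le_1: "is_channel W \<Longrightarrow> W x y \<le> 1"
  unfolding is_channel_def using has_sum_le_single by metis

lemma push_has_sum:
  assumes "is_pmf P" "is_channel W"
  shows "((\<lambda>x. P x * W x y) has_sum push P W y) UNIV"
proof -
  have "P summable_on UNIV" using assms(1) unfolding is_pmf_def summable_on_def by blast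
  then have "(\<lambda>x. P x * W x y) summable_on UNIV"
    by (rule summable_on_comparison_test)
       (use assms channel_nonneg[OF assms(2)] channel_le_1[OF assms(2)] in
        \<open>auto simp: is_pmf_def intro: mult_left_le\<close>)
  then show ?thesis unfolding push_def by (rule has_sum_infsum)
qed

lemma is_pmf_push:
  assumes P: "is_pmf P" and W: "is_channel W"
  shows "is_pmf (push P W)"
proof -
  have P_nonneg: "\<And>x. 0 \<le> P x" and P1: "(P has_sum 1) UNIV" using P unfolding is_pmf_def by auto
  have row: "((\<lambda>y. (\<lambda>(x, y). P x * W x y) (x, y)) has_sum P x) UNIV" for x
    using has_sum_cmult_right[of "W x" UNIV 1 "P x"] W unfolding is_channel_def by auto
  have "(\<lambda>(x, y). P x * W x y) summable_on Sigma UNIV (\<lambda>_. UNIV)"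
    by (rule summable_on_SigmaI[OF row]) (use P1 W P_nonneg in \<open>auto simp: summable_on_def is_channel_def\<close>)
  then have "((\<lambda>(x, y). P x * W x y) has_sum 1) (UNIV \<times> UNIV)"
    using has_sum_SigmaI[OF row P1] by simp
  then have "((\<lambda>(y, x). P x * W x y) has_sum 1) (UNIV \<times> UNIV)"
    using has_sum_swap[where f = "\<lambda>(x, y). P x * W x y" and A = UNIV and B = UNIV] by simp
  then have "(push P W has_sum 1) UNIV"
    by (rule has_sum_SigmaD[where A = UNIV and B = "\<lambda>_. UNIV"]) (use push_has_sum[OF P W] in auto)
  moreover have "0 \<le> push P W y" for y
    using P_nonneg channel_nonneg[OF W] unfolding push_def by (intro infsum_nonneg) simp
  ultimately show ?thesis unfolding is_pmf_def by blast
qed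

lemma push_pos:
  assumes "is_pmf P" "is_channel W" "\<And>x. P x > 0" "W x y > 0"
  shows "push P W y > 0"
proof -
  have "P x * W x y \<le> push P W y"
    by (rule has_sum_le_single[OF push_has_sum[OF assms(1,2)]])
       (use assms(1) channel_nonneg[OF assms(2)] in \<open>simp add: is_pmf_def\<close>)
  moreover have "P x * W x y > 0" using assms(3,4) by simp
  ultimately show ?thesis by simp
qed

lemma push_ge_cmult:
  assumes P: "is_pmf P" and Q: "is_pmf Q" and W: "is_channel W" and le: "\<And>x. a * Q x \<le> P x"
  shows "a * push Q W y \<le> push P W y"
proof (rule has_sum_mono[OF has_sum_cmult_right[OF push_has_sum[OF Q W]] push_has_sum[OF P W]])
  fix x
  show "a * (Q x * W x y) \<le> P x * W x y"
    using mult_right_mono[OF le channel_nonneg[OF W]] by (simp add: mult.assoc)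
qed

lemma push_le_cmult:
  assumes P: "is_pmf P" and Q: "is_pmf Q" and W: "is_channel W" and le: "\<And>x. P x \<le> a * Q x"
  shows "push P W y \<le> a * push Q W y"
proof (rule has_sum_mono[OF push_has_sum[OF P W] has_sum_cmult_right[OF push_has_sum[OF Q W]]])
  fix x
  show "P x * W x y \<le> a * (Q x * W x y)"
    using mult_right_mono[OF le channel_nonneg[OF W]] by (simp add: mult.assoc)
qed

lemma push_ratio_between:
  assumes P: "is_pmf P" and Q: "is_pmf Q" and W: "is_channel W"
    and Q_pos: "\<And>x. Q x > 0" and QY_pos: "push Q W y > 0"
    and lower: "\<And>x. a \<le> P x / Q x" and upper: "\<And>x. ereal (P x / Q x) \<le> b"
  shows "a \<le> push P W y / push Q W y" and "ereal (push P W y / push Q W y) \<le> b"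
proof -
  have "a * Q x \<le> P x" for x using lower[of x] Q_pos[of x] by (simp add: le_divide_eq)
  then show "a \<le> push P W y / push Q W y"
    using push_ge_cmult[OF P Q W] QY_pos by (simp add: le_divide_eq)
  show "ereal (push P W y / push Q W y) \<le> b"
  proof (cases b)
    case (real s)
    then have "P x \<le> s * Q x" for x using upper[of x] Q_pos[of x] by (simp add: divide_le_eq)
    then show ?thesis
      using push_le_cmult[OF P Q W] QY_pos real by (simp add: divide_le_eq)
  qed (use upper in auto)
qed

section \<open>Contraction of \<open>D\<^sub>f\<close> versus \<open>\<chi>\<^sup>2\<close>\<close>

lemma Df_push_le_kappa_chi2:
  fixes f :: "real \<Rightarrow> real" and P Q :: "'x \<Rightarrow> real" and W :: "'x \<Rightarrow> 'y \<Rightarrow> real"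
  assumes f_convex: "convex_on {0<..} f" and f_deriv: "(f has_real_derivative f1) (at 1)"
    and f_one: "f 1 = 0" and g_convex: "convex_on {0<..} (\<lambda>t. (f t - f0) / t)"
    and pos: "f0 + f1 > 0"
    and P: "is_pmf P" and P_pos: "\<And>x. P x > 0" and Q: "is_pmf Q" and Q_pos: "\<And>x. Q x > 0"
    and W: "is_channel W" and W_cover: "\<And>y. \<exists>x. W x y > 0"
    and "P \<noteq> Q" and fin: "Df_finite f P Q"
  shows "ereal (Df f (push P W) (push Q W) / Df f P Q)
    \<le> ereal (1 / (f0 + f1)) * kappa f f1 (INF x. P x / Q x) (SUP x. ereal (P x / Q x))
       * ereal (chi2 (push P W) (push Q W) / chi2 P Q)"
proof -
  define \<xi>\<^sub>1 where "\<xi>\<^sub>1 = (INF x. P x / Q x)"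
  define \<xi>\<^sub>2 where "\<xi>\<^sub>2 = (SUP x. ereal (P x / Q x))"
  define PY QY where "PY = push P W" and "QY = push Q W"
  have ratio_pos: "P x / Q x > 0" for x using P_pos Q_pos by simp
  have bdd: "bdd_below (range (\<lambda>x. P x / Q x))"
    using ratio_pos by (intro bdd_belowI[of _ 0]) (auto simp: less_imp_le)
  have \<xi>\<^sub>1_le: "\<xi>\<^sub>1 \<le> P x / Q x" for x unfolding \<xi>\<^sub>1_def by (rule cINF_lower[OF bdd]) simp
  have \<xi>\<^sub>1_nonneg: "0 \<le> \<xi>\<^sub>1"
    unfolding \<xi>\<^sub>1_def using ratio_pos by (intro cINF_greatest) (auto simp: less_imp_le)
  have \<xi>\<^sub>2_ge: "ereal (P x / Q x) \<le> \<xi>\<^sub>2" for x unfolding \<xi>\<^sub>2_def by (rule SUP_upper) simp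
  obtain x\<^sub>0 where "P x\<^sub>0 < Q x\<^sub>0" using pmf_exists_less[OF P Q \<open>P \<noteq> Q\<close>] by blast
  then have "P x\<^sub>0 / Q x\<^sub>0 < 1" using Q_pos[of x\<^sub>0] by simp
  then have "\<xi>\<^sub>1 < 1" using \<xi>\<^sub>1_le[of x\<^sub>0] by linarith
  have PY_pos: "PY y > 0" and QY_pos: "QY y > 0" for y
    unfolding PY_def QY_def using W_cover[of y] push_pos[OF P W P_pos] push_pos[OF Q W Q_pos] by blast+
  have ratio_Y: "\<xi>\<^sub>1 \<le> PY y / QY y" "ereal (PY y / QY y) \<le> \<xi>\<^sub>2" for y
    unfolding PY_def QY_def using push_ratio_between[OF P Q W Q_pos QY_pos[unfolded QY_def] \<xi>\<^sub>1_le \<xi>\<^sub>2_ge] .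
  have K: "0 < kappa f f1 \<xi>\<^sub>1 \<xi>\<^sub>2"
    by (rule kappa_pos[OF f_deriv f_one g_convex \<xi>\<^sub>1_nonneg \<open>\<xi>\<^sub>1 < 1\<close> pos])
  have "ereal (Df f PY QY / Df f P Q)
    \<le> ereal (1 / (f0 + f1)) * kappa f f1 \<xi>\<^sub>1 \<xi>\<^sub>2 * ereal (chi2 PY QY / chi2 P Q)"
  proof (rule Df_ratio_le_chi2_ratio[OF _ _ Q_pos _ _ QY_pos \<open>P \<noteq> Q\<close> pos K f_one fin])
    show "(P has_sum 1) UNIV" "(Q has_sum 1) UNIV" "(PY has_sum 1) UNIV" "(QY has_sum 1) UNIV"
      using P Q is_pmf_push[OF P W] is_pmf_push[OF Q W] unfolding PY_def QY_def is_pmf_def by auto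
    show "(f0 + f1) * (P x / Q x - 1)^2 \<le> f (P x / Q x) + f1 * (1 - P x / Q x)" for x
      by (rule quadratic_lower_bound[OF f_deriv f_one g_convex ratio_pos])
    show "(f0 + f1) * (PY y / QY y - 1)^2 \<le> f (PY y / QY y) + f1 * (1 - PY y / QY y)" for y
      using PY_pos QY_pos by (intro quadratic_lower_bound[OF f_deriv f_one g_convex]) simp
    show "ereal ((f (PY y / QY y) + f1 * (1 - PY y / QY y)) / (PY y / QY y - 1)^2)
      \<le> kappa f f1 \<xi>\<^sub>1 \<xi>\<^sub>2" if "PY y / QY y \<noteq> 1" for y
      using PY_pos[of y] QY_pos[of y] that ratio_Y by (intro le_kappa_closed[OF f_convex]) simp_all
  qed
  then show ?thesis unfolding PY_def QY_def \<xi>\<^sub>1_def \<xi>\<^sub>2_def .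
qed

lemma fext_quadratic_lower_bound:
  fixes f :: "real \<Rightarrow> real"
  assumes f_deriv: "(f has_real_derivative f1) (at 1)" and f_one: "f 1 = 0"
    and g_convex: "convex_on {0<..} (\<lambda>t. (f t - f0) / t)" and t: "0 \<le> t"
  shows "(f0 + f1) * (t - 1)^2 \<le> fext f f0 t + f1 * (1 - t)"
  using quadratic_lower_bound[OF f_deriv f_one g_convex, of t] t
  by (cases "t = 0") (simp_all add: fext_def)

lemma fext_le_kappa:
  fixes f :: "real \<Rightarrow> real"
  assumes f_convex: "convex_on {0<..} f" and f_deriv: "(f has_real_derivative f1) (at 1)"
    and f_one: "f 1 = 0" and g_convex: "convex_on {0<..} (\<lambda>t. (f t - f0) / t)"
    and t: "0 \<le> t" "t \<noteq> 1" "ereal t \<le> b"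
  shows "ereal ((fext f f0 t + f1 * (1 - t)) / (t - 1)^2) \<le> kappa f f1 0 b"
proof (cases "t = 0")
  case True
  then show ?thesis using f0_plus_f1_le_kappa[OF f_deriv f_one g_convex, of 0 b] by (simp add: fext_def)
next
  case False
  then show ?thesis using le_kappa_closed[OF f_convex, of t 0 b] t by (simp add: fext_def)
qed

lemma Df_push_le_kappa_chi2_bounded:
  fixes f :: "real \<Rightarrow> real" and P Q :: "'x \<Rightarrow> real" and W :: "'x \<Rightarrow> 'y \<Rightarrow> real"
  assumes f_convex: "convex_on {0<..} f" and f_deriv: "(f has_real_derivative f1) (at 1)"
    and f_one: "f 1 = 0" and g_convex: "convex_on {0<..} (\<lambda>t. (f t - f0) / t)"
    and pos: "f0 + f1 > 0"
    and P: "is_pmf P" and Q: "is_pmf Q" and Q_pos: "\<And>x. Q x > 0"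
    and W: "is_channel W" and W_cover: "\<And>y. \<exists>x. W x y > 0"
    and "P \<noteq> Q" and fin: "Df_finite (fext f f0) P Q" and bounded: "\<And>x. P x / Q x \<le> b"
  shows "ereal (Df (fext f f0) (push P W) (push Q W) / Df (fext f f0) P Q)
    \<le> ereal (1 / (f0 + f1)) * kappa f f1 0 (ereal b) * ereal (chi2 (push P W) (push Q W) / chi2 P Q)"
proof (rule Df_ratio_le_chi2_ratio[OF _ _ Q_pos _ _ _ \<open>P \<noteq> Q\<close> pos])
  have ratio: "0 \<le> P x / Q x" for x using P Q_pos[of x] unfolding is_pmf_def by simp
  have QY_pos: "push Q W y > 0" for y using W_cover[of y] push_pos[OF Q W Q_pos] by blast
  then show "\<And>y. push Q W y > 0" .
  note ratio_Y = push_ratio_between[OF P Q W Q_pos QY_pos ratio, of "ereal b"]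
  show "(P has_sum 1) UNIV" "(Q has_sum 1) UNIV" "(push P W has_sum 1) UNIV" "(push Q W has_sum 1) UNIV"
    using P Q is_pmf_push[OF P W] is_pmf_push[OF Q W] unfolding is_pmf_def by auto
  show "0 < kappa f f1 0 (ereal b)" by (rule kappa_pos[OF f_deriv f_one g_convex _ _ pos]) simp_all
  show "fext f f0 1 = 0" using f_one by (simp add: fext_def)
  show "Df_finite (fext f f0) P Q" by (rule fin)
  show "(f0 + f1) * (P x / Q x - 1)^2 \<le> fext f f0 (P x / Q x) + f1 * (1 - P x / Q x)" for x
    by (rule fext_quadratic_lower_bound[OF f_deriv f_one g_convex ratio])
  show "(f0 + f1) * (push P W y / push Q W y - 1)^2
    \<le> fext f f0 (push P W y / push Q W y) + f1 * (1 - push P W y / push Q W y)" for y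
    using ratio_Y(1) bounded by (intro fext_quadratic_lower_bound[OF f_deriv f_one g_convex]) simp
  show "ereal ((fext f f0 (push P W y / push Q W y) + f1 * (1 - push P W y / push Q W y))
      / (push P W y / push Q W y - 1)^2) \<le> kappa f f1 0 (ereal b)"
    if "push P W y / push Q W y \<noteq> 1" for y
    using ratio_Y bounded that by (intro fext_le_kappa[OF f_convex f_deriv f_one g_convex]) simp_all
qed

lemma mu_le_kappa_mu_chi2:
  fixes f :: "real \<Rightarrow> real" and Q :: "'x \<Rightarrow> real" and W :: "'x \<Rightarrow> 'y \<Rightarrow> real"
  assumes f_convex: "convex_on {0<..} f" and f_deriv: "(f has_real_derivative f1) (at 1)"
    and f_one: "f 1 = 0" and g_convex: "convex_on {0<..} (\<lambda>t. (f t - f0) / t)"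
    and pos: "f0 + f1 > 0"
    and Q: "is_pmf Q" and Q_pos: "\<And>x. Q x > 0"
    and W: "is_channel W" and W_cover: "\<And>y. \<exists>x. W x y > 0" and fin: "finite (UNIV :: 'x set)"
  shows "mu (fext f f0) Q W
    \<le> ereal (1 / (f0 + f1)) * kappa f f1 0 (ereal (1 / Min (range Q))) * mu (\<lambda>t. (t - 1)^2) Q W"
  unfolding mu_def[of "fext f f0"]
proof (rule SUP_least)
  let ?\<chi>\<^sub>2 = "\<lambda>t. (t - 1)^2 :: real"
  fix P assume "P \<in> {P. is_pmf P \<and> Df_finite (fext f f0) P Q \<and> 0 < Df (fext f f0) P Q}"
  then have P: "is_pmf P" and fin_P: "Df_finite (fext f f0) P Q" and "0 < Df (fext f f0) P Q"
    by auto
  have "P \<noteq> Q"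
    using \<open>0 < Df (fext f f0) P Q\<close> Q_pos f_one by (auto simp: Df_def fext_def less_imp_neq[symmetric])
  have "Min (range Q) \<le> Q x" "0 < Min (range Q)" for x using fin Q_pos by auto
  then have "P x / Q x \<le> 1 / Min (range Q)" for x
    using pmf_le_1[OF P, of x] Q_pos[of x] by (simp add: frac_le)
  note bound = Df_push_le_kappa_chi2_bounded[OF f_convex f_deriv f_one g_convex pos P Q Q_pos W W_cover
      \<open>P \<noteq> Q\<close> fin_P this]
  have "chi2_finite P Q" unfolding chi2_finite_def using fin by simp
  then have "P \<in> {P. is_pmf P \<and> Df_finite ?\<chi>\<^sub>2 P Q \<and> 0 < Df ?\<chi>\<^sub>2 P Q}"
    using P chi2_pos[OF Q_pos _ \<open>P \<noteq> Q\<close>] Df_chi2[of Q P, OF Q_pos] by simp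
  then have "ereal (Df ?\<chi>\<^sub>2 (push P W) (push Q W) / Df ?\<chi>\<^sub>2 P Q) \<le> mu ?\<chi>\<^sub>2 Q W"
    unfolding mu_def by (rule SUP_upper)
  moreover have "push Q W y > 0" for y using W_cover[of y] push_pos[OF Q W Q_pos] by blast
  ultimately have "ereal (chi2 (push P W) (push Q W) / chi2 P Q) \<le> mu ?\<chi>\<^sub>2 Q W"
    using Df_chi2(1)[of Q P, OF Q_pos] Df_chi2(1)[of "push Q W" "push P W"] by simp
  moreover have "0 \<le> ereal (1 / (f0 + f1)) * kappa f f1 0 (ereal (1 / Min (range Q)))"
    using pos kappa_pos[OF f_deriv f_one g_convex _ _ pos, of 0 "ereal (1 / Min (range Q))"]
    by simp
  ultimately show "ereal (Df (fext f f0) (push P W) (push Q W) / Df (fext f f0) P Q)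
    \<le> ereal (1 / (f0 + f1)) * kappa f f1 0 (ereal (1 / Min (range Q))) * mu ?\<chi>\<^sub>2 Q W"
    using order_trans[OF bound ereal_mult_left_mono] by blast
qed

theorem theorem3:
  fixes f :: "real \<Rightarrow> real" and f0 f1 :: real
    and Q :: "'x::countable \<Rightarrow> real" and W :: "'x \<Rightarrow> 'y::countable \<Rightarrow> real"
  assumes f_convex: "convex_on {0<..} f"
    and f_deriv: "(f has_real_derivative f1) (at 1)"
    and f_one: "f 1 = 0"
    and f_zero: "(f \<longlongrightarrow> f0) (at_right 0)"
    and g_convex: "convex_on {0<..} (\<lambda>t. (f t - f0) / t)"
    and pos: "f0 + f1 > 0"
    and Q_pmf: "is_pmf Q" and Q_full: "\<forall>x. Q x > 0"
    and W_ch: "is_channel W"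
    and W_cover: "\<forall>y. \<exists>x. W x y > 0"
  shows
    "(\<forall>P :: 'x \<Rightarrow> real. is_pmf P \<and> (\<forall>x. P x > 0) \<and> P \<noteq> Q
        \<and> Df_finite f P Q \<and> chi2_finite P Q \<longrightarrow>
        ereal (Df f (push P W) (push Q W) / Df f P Q)
          \<le> ereal (1 / (f0 + f1))
             * kappa f f1 (INF x. P x / Q x) (SUP x. ereal (P x / Q x))
             * ereal (chi2 (push P W) (push Q W) / chi2 P Q))
     \<and> (finite (UNIV :: 'x set) \<and> 2 \<le> CARD('x) \<longrightarrow>
        mu (fext f f0) Q W
          \<le> ereal (1 / (f0 + f1)) * kappa f f1 0 (ereal (1 / Min (range Q)))
             * mu (\<lambda>t. (t - 1)^2) Q W)"
  by (intro conjI allI impI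
        Df_push_le_kappa_chi2[OF f_convex f_deriv f_one g_convex pos _ _ Q_pmf _ W_ch]
        mu_le_kappa_mu_chi2[OF f_convex f_deriv f_one g_convex pos Q_pmf _ W_ch])
     (use Q_full W_cover in auto)

end
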